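(* Consider a clinical activity network built from a finite set of activities as follows: each activity $v$ is represented by a start node $v^s$ and an end node $v^e$ joined by an arc $(v^s,v^e)$; the other arcs are of the form $(u^e,v^s)$ (possibly $u=v$), $(\mathrm{START},v^s)$ or $(v^e,\mathrm{END})$, where START and END are two artificial nodes (we write $\mathrm{START}^e=\mathrm{START}$ and $\mathrm{END}^s=\mathrm{END}$). Let $\mathbf{c}^*\in\mathbb{R}^n$ be arc costs. A sequence of activities $(\nu_1,\dots,\nu_k)$ corresponds to the walk $\mathrm{START}\to\nu_1^s\to\nu_1^e\to\cdots\to\nu_k^s\to\nu_k^e\to\mathrm{END}$ (assumed to use only arcs of the network), and its flow vector counts the number of traversals of each arc. Let $\mathbf{x}^*$ be a shortest START–END path under $\mathbf{c}^*$, given by the activity sequence $(\gamma_1,\dots,\gamma_K)$; set $\gamma_0=\mathrm{START}$, $\gamma_{K+1}=\mathrm{END}$. Let $\hat{\mathbf{x}}$ be a patient pathway whose activity sequence is written as $(\Delta_0,\Gamma_1,\Delta_1,\Gamma_2,\dots,\Gamma_K,\Delta_K)$ (between START and END), where each $\Gamma_i\in\{\emptyset,\gamma_i\}$, each $\Delta_i$ is a (possibly empty) finite sequence of activities, and $\Delta_i=\emptyset$ whenever $\Gamma_i=\emptyset$ ($1\le i\le K$). Let $\Gamma_0=\gamma_0$, $\Gamma_{K+1}=\gamma_{K+1}$. For each pair of indices $i<i+l$ with $\Gamma_i=\gamma_i$, $\Gamma_{i+l}=\gamma_{i+l}$ and $\Gamma_{i+1}=\dots=\Gamma_{i+l-1}=\emptyset$,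 if $l>1$ or $\Delta_i\neq\emptyset$, this gap is called a detour $\theta$ (from $\gamma_i$ to $\gamma_{i+l}$, with discordant activities $\Delta_i$). Define its cost $$C(\theta)=\frac{E(\theta)-F(\theta)}{M(\hat{\mathbf{x}})-\mathbf{c}^{*\top}\mathbf{x}^*},$$ where $E(\theta)$ is the total $\mathbf{c}^*$-cost of the arcs of the patient walk from $\gamma_i^e$ to $\gamma_{i+l}^s$ (i.e. $c^*_{\gamma_i^e\delta_1^s}+\phi(\Delta_i)+c^*_{\delta_k^e\gamma_{i+l}^s}$ if $\Delta_i=(\delta_1,\dots,\delta_k)\ne\emptyset$, and $c^*_{\gamma_i^e\gamma_{i+l}^s}$ if $\Delta_i=\emptyset$), and $F(\theta)$ is the total $\mathbf{c}^*$-cost of the arcs of the reference walk $\mathbf{x}^*$ from $\gamma_i^e$ to $\gamma_{i+l}^s$ (i.e. $c^*_{\gamma_i^e\gamma_{i+1}^s}+\phi((\gamma_{i+1},\dots,\gamma_{i+l-1}))+c^*_{\gamma_{i+l-1}^e\gamma_{i+l}^s}$ for $l>1$, and $c^*_{\gamma_i^e\gamma_{i+1}^s}$ for $l=1$). Here $\phi((\nu_1,\dots,\nu_k))=\sum_{j=1}^{k-1}c^*_{\nu_j^e\nu_{j+1}^s}+\sum_{j=1}^k c^*_{\nu_j^s\nu_j^e}$, and $M(\hat{\mathbf{x}})=\max\{\mathbf{c}^{*\top}\mathbf{x}: \mathbf{x}$ is the flow vector of a START–END walk with $\|\mathbf{x}\|_1\le\|\hat{\mathbf{x}}\|_1\}$,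 assumed to differ from $\mathbf{c}^{*\top}\mathbf{x}^*$. Let $\Theta$ be the set of all detours of $\hat{\mathbf{x}}$, and let $\omega(\hat{\mathbf{x}})=1-\dfrac{\mathbf{c}^{*\top}\hat{\mathbf{x}}-\mathbf{c}^{*\top}\mathbf{x}^*}{M(\hat{\mathbf{x}})-\mathbf{c}^{*\top}\mathbf{x}^*}$. Then $$\omega(\hat{\mathbf{x}})=1-\sum_{\theta\in\Theta}C(\theta).$$
   Context: $\omega(\hat{\mathbf{x}})$ is the concordance score of the patient pathway $\hat{\mathbf{x}}$; in the paper $\mathbf{c}^*$ is an arc cost vector obtained by inverse optimization, and $\mathbf{x}^*$ is a reference (concordant) pathway assumed to be a shortest path under $\mathbf{c}^*$. $\Gamma_i$ marks whether the concordant activity $\gamma_i$ appears in its place in the patient pathway, and $\Delta_i$ are the extra (discordant) activities occurring after it. *)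

theory Defs
  imports Main Complex_Main
begin

datatype 'a node = Start | End | Snode 'a | Enode 'a

type_synonym 'a arc = "'a node \<times> 'a node"

definition activity_network :: "'a set \<Rightarrow> 'a arc set \<Rightarrow> bool" where
  "activity_network V A \<longleftrightarrow> finite V \<and>
     (\<forall>v\<in>V. (Snode v, Enode v) \<in> A) \<and>
     (\<forall>a\<in>A. (\<exists>v\<in>V. a = (Snode v, Enode v)) \<or>
             (\<exists>u\<in>V. \<exists>v\<in>V. a = (Enode u, Snode v)) \<or>
             (\<exists>v\<in>V. a = (Start, Snode v)) \<or>
             (\<exists>v\<in>V. a = (Enode v, End)))"

definition walk_arcs :: "'a node list \<Rightarrow> 'a arc list" where
  "walk_arcs ns = zip ns (tl ns)"

definition st_walk :: "'a arc set \<Rightarrow> 'a node list \<Rightarrow> bool" where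
  "st_walk A ns \<longleftrightarrow> ns \<noteq> [] \<and> hd ns = Start \<and> last ns = End \<and> set (walk_arcs ns) \<subseteq> A"

definition st_path :: "'a arc set \<Rightarrow> 'a node list \<Rightarrow> bool" where
  "st_path A ns \<longleftrightarrow> st_walk A ns \<and> distinct ns"

definition flow :: "'a node list \<Rightarrow> 'a arc \<Rightarrow> nat" where
  "flow ns a = count_list (walk_arcs ns) a"

definition lin :: "('a arc \<Rightarrow> real) \<Rightarrow> 'a arc set \<Rightarrow> ('a arc \<Rightarrow> nat) \<Rightarrow> real" where
  "lin c A x = (\<Sum>a\<in>A. c a * real (x a))"

definition norm1 :: "'a arc set \<Rightarrow> ('a arc \<Rightarrow> nat) \<Rightarrow> nat" where
  "norm1 A x = (\<Sum>a\<in>A. x a)"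

definition act_nodes :: "'a list \<Rightarrow> 'a node list" where
  "act_nodes xs = concat (map (\<lambda>v. [Snode v, Enode v]) xs)"

definition seq_walk :: "'a list \<Rightarrow> 'a node list" where
  "seq_walk xs = Start # act_nodes xs @ [End]"

definition Mval :: "('a arc \<Rightarrow> real) \<Rightarrow> 'a arc set \<Rightarrow> ('a arc \<Rightarrow> nat) \<Rightarrow> real" where
  "Mval c A x = Max {lin c A (flow ns) | ns. st_walk A ns \<and> norm1 A (flow ns) \<le> norm1 A x}"

definition phi :: "('a arc \<Rightarrow> real) \<Rightarrow> 'a list \<Rightarrow> real" where
  "phi c xs = (\<Sum>j<length xs - 1. c (Enode (xs ! j), Snode (xs ! (j+1))))
             + (\<Sum>j<length xs. c (Snode (xs ! j), Enode (xs ! j)))"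

text \<open>Reference sequence gam = (gamma_1,...,gamma_K); gamma_0 = START, gamma_{K+1} = END.
  gam_e i is gamma_i^e (with START^e = START), gam_s i is gamma_i^s (with END^s = END).\<close>
definition gam_e :: "'a list \<Rightarrow> nat \<Rightarrow> 'a node" where
  "gam_e gam i = (if i = 0 then Start else Enode (gam ! (i - 1)))"

definition gam_s :: "'a list \<Rightarrow> nat \<Rightarrow> 'a node" where
  "gam_s gam i = (if i = length gam + 1 then End else Snode (gam ! (i - 1)))"

text \<open>Patient sequence (Delta_0, Gamma_1, Delta_1, ..., Gamma_K, Delta_K), where
  Gamma_i = gamma_i if g i and Gamma_i is empty otherwise.\<close>
definition patient_seq :: "'a list \<Rightarrow> (nat \<Rightarrow> bool) \<Rightarrow> (nat \<Rightarrow> 'a list) \<Rightarrow> 'a list" where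
  "patient_seq gam g D =
     D 0 @ concat (map (\<lambda>i. (if g i then [gam ! (i - 1)] else []) @ D i) [1..<length gam + 1])"

definition present :: "'a list \<Rightarrow> (nat \<Rightarrow> bool) \<Rightarrow> nat \<Rightarrow> bool" where
  "present gam g i \<longleftrightarrow> i = 0 \<or> i = length gam + 1 \<or> (1 \<le> i \<and> i \<le> length gam \<and> g i)"

text \<open>Detours, represented as pairs (i, i+l).\<close>
definition detours :: "'a list \<Rightarrow> (nat \<Rightarrow> bool) \<Rightarrow> (nat \<Rightarrow> 'a list) \<Rightarrow> (nat \<times> nat) set" where
  "detours gam g D = {(i, j). i < j \<and> j \<le> length gam + 1 \<and> present gam g i \<and> present gam g j \<and>
        (\<forall>m. i < m \<and> m < j \<longrightarrow> \<not> present gam g m) \<and> (j - i > 1 \<or> D i \<noteq> [])}"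

definition Ecost :: "('a arc \<Rightarrow> real) \<Rightarrow> 'a list \<Rightarrow> (nat \<Rightarrow> 'a list) \<Rightarrow> nat \<times> nat \<Rightarrow> real" where
  "Ecost c gam D \<theta> = (case \<theta> of (i, j) \<Rightarrow>
     (if D i = [] then c (gam_e gam i, gam_s gam j)
      else c (gam_e gam i, Snode (hd (D i))) + phi c (D i) + c (Enode (last (D i)), gam_s gam j)))"

definition Fcost :: "('a arc \<Rightarrow> real) \<Rightarrow> 'a list \<Rightarrow> nat \<times> nat \<Rightarrow> real" where
  "Fcost c gam \<theta> = (case \<theta> of (i, j) \<Rightarrow>
     (if j = i + 1 then c (gam_e gam i, gam_s gam (i + 1))
      else c (gam_e gam i, gam_s gam (i + 1)) + phi c (map (\<lambda>m. gam ! (m - 1)) [i+1..<j])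
           + c (gam_e gam (j - 1), gam_s gam j)))"

definition detour_cost ::
  "('a arc \<Rightarrow> real) \<Rightarrow> 'a arc set \<Rightarrow> 'a list \<Rightarrow> 'a list \<Rightarrow> (nat \<Rightarrow> 'a list) \<Rightarrow> nat \<times> nat \<Rightarrow> real" where
  "detour_cost c A gam pat D \<theta> =
     (Ecost c gam D \<theta> - Fcost c gam \<theta>) /
     (Mval c A (flow (seq_walk pat)) - lin c A (flow (seq_walk gam)))"

definition omega :: "('a arc \<Rightarrow> real) \<Rightarrow> 'a arc set \<Rightarrow> 'a list \<Rightarrow> 'a list \<Rightarrow> real" where
  "omega c A gam pat =
     1 - (lin c A (flow (seq_walk pat)) - lin c A (flow (seq_walk gam))) /
         (Mval c A (flow (seq_walk pat)) - lin c A (flow (seq_walk gam)))"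

end

theory Submission imports Defs begin

(* Call an index i present if Gamma_i = gamma_i. Both the patient walk and the reference walk
   traverse the arc gamma_i^s -> gamma_i^e of every present i with 1 <= i <= K. Cutting both walks
   at these arcs leaves, for each pair i < j of consecutive present indices, a patient piece of
   cost E(i, j) and a reference piece of cost F(i, j). Hence the cost difference of the two walks
   is the sum of E - F over these pairs; the pairs that are not detours (j = i + 1, Delta_i empty)
   have E = F. Dividing by M(xhat) - c*^T x* gives the formula for omega. *)

definition walk_cost :: "('a arc \<Rightarrow> real) \<Rightarrow> 'a node list \<Rightarrow> real" where
  "walk_cost c ns = sum_list (map c (walk_arcs ns))"

lemma walk_cost_Nil [simp]: "walk_cost c [] = 0"
  by (simp add: walk_cost_def walk_arcs_def)

lemma walk_cost_singleton [simp]: "walk_cost c [x] = 0"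
  by (simp add: walk_cost_def walk_arcs_def)

lemma walk_cost_Cons_Cons [simp]: "walk_cost c (x # y # ys) = c (x, y) + walk_cost c (y # ys)"
  by (simp add: walk_cost_def walk_arcs_def)

lemma walk_cost_split:
  "walk_cost c (xs @ y # ys) = walk_cost c (xs @ [y]) + walk_cost c (y # ys)"
  by (induction xs rule: induct_list012) simp_all

lemma walk_cost_enclosed:
  assumes "ns \<noteq> []"
  shows "walk_cost c (x # ns @ [y]) = c (x, hd ns) + walk_cost c ns + c (last ns, y)"
proof -
  obtain ms m where ns: "ns = ms @ [m]"
    using assms rev_exhaust by blast
  have "walk_cost c (x # ms @ [m]) = c (x, hd (ms @ [m])) + walk_cost c (ms @ [m])"
    by (cases ms) simp_all
  then show ?thesis
    using walk_cost_split[of c "x # ms" m "[y]"] by (simp add: ns)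
qed

lemma sum_count_list_eq_sum_list:
  assumes "finite A" "set xs \<subseteq> A"
  shows "(\<Sum>a\<in>A. c a * real (count_list xs a)) = sum_list (map c xs)"
  using assms(2)
proof (induction xs)
  case (Cons x xs)
  have "(\<Sum>a\<in>A. c a * real (count_list (x # xs) a))
      = (\<Sum>a\<in>A. if a = x then c a else 0) + (\<Sum>a\<in>A. c a * real (count_list xs a))"
    by (subst sum.distrib[symmetric]) (rule sum.cong, auto simp: algebra_simps)
  also have "(\<Sum>a\<in>A. if a = x then c a else 0) = c x"
    using Cons.prems assms(1) by (simp add: sum.delta')
  finally show ?case
    using Cons by simp
qed simp

lemma lin_flow_eq_walk_cost:
  assumes "finite A" "set (walk_arcs ns) \<subseteq> A"
  shows "lin c A (flow ns) = walk_cost c ns"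
  using sum_count_list_eq_sum_list[OF assms] by (simp add: lin_def flow_def walk_cost_def)

lemma activity_network_finite_arcs:
  assumes "activity_network V A"
  shows "finite A"
proof (rule finite_subset)
  show "A \<subseteq> (\<lambda>v. (Snode v, Enode v)) ` V \<union> (\<lambda>(u, v). (Enode u, Snode v)) ` (V \<times> V)
          \<union> (\<lambda>v. (Start, Snode v)) ` V \<union> (\<lambda>v. (Enode v, End)) ` V"
    using assms unfolding activity_network_def by fastforce
  show "finite \<dots>"
    using assms by (simp add: activity_network_def)
qed

lemma act_nodes_simps [simp]:
  "act_nodes [] = []"
  "act_nodes (x # xs) = Snode x # Enode x # act_nodes xs"
  "act_nodes (xs @ ys) = act_nodes xs @ act_nodes ys"
  by (simp_all add: act_nodes_def)

lemma act_nodes_eq_Nil_iff [simp]: "act_nodes xs = [] \<longleftrightarrow> xs = []"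
  by (cases xs) auto

lemma hd_act_nodes: "xs \<noteq> [] \<Longrightarrow> hd (act_nodes xs) = Snode (hd xs)"
  by (cases xs) auto

lemma last_act_nodes: "xs \<noteq> [] \<Longrightarrow> last (act_nodes xs) = Enode (last xs)"
  by (induction xs) auto

lemma phi_eq_walk_cost: "phi c xs = walk_cost c (act_nodes xs)"
proof (induction xs)
  case (Cons x xs)
  have "phi c (x # xs) = c (Snode x, Enode x) +
      (case xs of [] \<Rightarrow> 0 | y # _ \<Rightarrow> c (Enode x, Snode y)) + phi c xs"
    by (cases xs) (simp_all add: phi_def sum.lessThan_Suc_shift del: sum.lessThan_Suc)
  with Cons show ?case
    by (cases xs) simp_all
qed (simp add: phi_def)

lemma Ecost_eq_walk_cost:
  "Ecost c gam D (i, j) = walk_cost c (gam_e gam i # act_nodes (D i) @ [gam_s gam j])"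
  by (cases "D i = []")
     (simp_all add: Ecost_def walk_cost_enclosed phi_eq_walk_cost hd_act_nodes last_act_nodes)

lemma Fcost_eq_walk_cost:
  assumes "i < j" "j \<le> length gam + 1"
  shows "Fcost c gam (i, j) =
    walk_cost c (gam_e gam i # act_nodes (map (\<lambda>m. gam ! (m - 1)) [i+1..<j]) @ [gam_s gam j])"
proof (cases "j = i + 1")
  case False
  let ?xs = "map (\<lambda>m. gam ! (m - 1)) [i+1..<j]"
  have ij: "i + 1 < j"
    using assms False by simp
  then have "?xs \<noteq> []" "hd ?xs = gam ! i" "last ?xs = gam ! (j - 2)"
    by (simp_all add: hd_map last_map numeral_2_eq_2)
  moreover have "gam_s gam (i + 1) = Snode (gam ! i)" "gam_e gam (j - 1) = Enode (gam ! (j - 2))"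
    using assms ij by (simp_all add: gam_s_def gam_e_def numeral_2_eq_2)
  ultimately show ?thesis
    using False by (simp add: Fcost_def walk_cost_enclosed phi_eq_walk_cost hd_act_nodes last_act_nodes)
qed (simp add: Fcost_def)

fun last_present :: "(nat \<Rightarrow> bool) \<Rightarrow> nat \<Rightarrow> nat" where
  "last_present g 0 = 0"
| "last_present g (Suc n) = (if g (Suc n) then Suc n else last_present g n)"

lemma last_present_le: "last_present g n \<le> n"
  by (induction n) auto

lemma last_present_marked: "last_present g n = 0 \<or> g (last_present g n)"
  by (induction n) auto

lemma not_marked_after_last_present: "last_present g n < m \<Longrightarrow> m \<le> n \<Longrightarrow> \<not> g m"
  by (induction n) (auto simp: le_Suc_eq split: if_splits)

lemma last_present_eqI:
  assumes "i \<le> n" "i = 0 \<or> g i" "\<And>m. i < m \<Longrightarrow> m \<le> n \<Longrightarrow> \<not> g m"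
  shows "last_present g n = i"
  using assms by (induction n) (auto simp: le_Suc_eq)

lemma detours_subset_last_present_image:
  "detours gam g D \<subseteq>
     (\<lambda>j. (last_present g (j - 1), j)) ` {j \<in> {1..length gam + 1}. present gam g j}"
proof
  fix \<theta> assume "\<theta> \<in> detours gam g D"
  then obtain i j where ij: "\<theta> = (i, j)" "i < j" "j \<le> length gam + 1"
    "present gam g i" "present gam g j" "\<And>m. i < m \<Longrightarrow> m < j \<Longrightarrow> \<not> present gam g m"
    by (auto simp: detours_def)
  have "last_present g (j - 1) = i"
  proof (rule last_present_eqI)
    show "i = 0 \<or> g i"
      using ij(2-4) by (auto simp: present_def)
    fix m assume "i < m" "m \<le> j - 1"
    then show "\<not> g m"
      using ij(3) ij(6)[of m] by (auto simp: present_def)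
  qed (use ij in simp)
  then show "\<theta> \<in> (\<lambda>j. (last_present g (j - 1), j)) ` {j \<in> {1..length gam + 1}. present gam g j}"
    using ij by force
qed

lemma non_detour_last_present_pair:
  assumes "1 \<le> j" "j \<le> length gam + 1" "present gam g j"
    and "(last_present g (j - 1), j) \<notin> detours gam g D"
  shows "j = Suc (last_present g (j - 1)) \<and> D (last_present g (j - 1)) = []"
proof -
  let ?i = "last_present g (j - 1)"
  have "?i < j" "present gam g ?i"
    using assms(1,2) last_present_le[of g "j - 1"] last_present_marked[of g "j - 1"]
    by (auto simp: present_def)
  moreover have "\<forall>m. ?i < m \<and> m < j \<longrightarrow> \<not> present gam g m"
    using assms(1,2) not_marked_after_last_present[of g "j - 1"] by (auto simp: present_def)
  ultimately show ?thesis
    using assms by (auto simp: detours_def)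
qed

lemma sum_detours:
  fixes h :: "nat \<times> nat \<Rightarrow> 'b::comm_monoid_add"
  assumes trivial: "\<And>i. D i = [] \<Longrightarrow> h (i, Suc i) = 0"
  shows "(\<Sum>\<theta>\<in>detours gam g D. h \<theta>) =
    (\<Sum>j = 1..length gam. if g j then h (last_present g (j - 1), j) else 0)
    + h (last_present g (length gam), length gam + 1)"
proof -
  let ?K = "length gam"
  let ?f = "\<lambda>j. (last_present g (j - 1), j)"
  let ?J = "{j \<in> {1..?K + 1}. present gam g j}"
  have "(\<Sum>\<theta>\<in>detours gam g D. h \<theta>) = (\<Sum>\<theta>\<in>?f ` ?J. h \<theta>)"
  proof (rule sum.mono_neutral_left)
    show "detours gam g D \<subseteq> ?f ` ?J"
      by (rule detours_subset_last_present_image)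
    show "\<forall>\<theta>\<in>?f ` ?J - detours gam g D. h \<theta> = 0"
      using non_detour_last_present_pair trivial by fastforce
  qed simp
  also have "\<dots> = (\<Sum>j\<in>?J. h (?f j))"
    by (rule sum.reindex_cong[of ?f]) (auto simp: inj_on_def)
  also have "\<dots> = (\<Sum>j = 1..?K + 1. if present gam g j then h (?f j) else 0)"
    by (rule sum.inter_filter) simp
  also have "\<dots> = (\<Sum>j = 1..?K. if g j then h (?f j) else 0) + h (?f (?K + 1))"
    by (auto simp: present_def intro!: sum.cong)
  finally show ?thesis
    by simp
qed

definition patient_prefix :: "'a list \<Rightarrow> (nat \<Rightarrow> bool) \<Rightarrow> (nat \<Rightarrow> 'a list) \<Rightarrow> nat \<Rightarrow> 'a list" where
  "patient_prefix gam g D n =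
     D 0 @ concat (map (\<lambda>i. (if g i then [gam ! (i - 1)] else []) @ D i) [1..<n + 1])"

lemma patient_prefix_0 [simp]: "patient_prefix gam g D 0 = D 0"
  by (simp add: patient_prefix_def)

lemma patient_prefix_Suc [simp]:
  "patient_prefix gam g D (Suc n) =
     patient_prefix gam g D n @ (if g (Suc n) then [gam ! n] else []) @ D (Suc n)"
  by (simp add: patient_prefix_def)

lemma patient_seq_eq_patient_prefix: "patient_seq gam g D = patient_prefix gam g D (length gam)"
  by (simp add: patient_seq_def patient_prefix_def)

lemma walk_cost_patient_prefix:
  assumes gaps: "\<And>i. 1 \<le> i \<Longrightarrow> i \<le> n \<Longrightarrow> \<not> g i \<Longrightarrow> D i = []" and "n \<le> length gam"
  shows "walk_cost c (Start # act_nodes (patient_prefix gam g D n) @ [y]) =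
    (\<Sum>j = 1..n. if g j then Ecost c gam D (last_present g (j - 1), j)
                               + c (Snode (gam ! (j - 1)), Enode (gam ! (j - 1))) else 0)
    + walk_cost c (gam_e gam (last_present g n) # act_nodes (D (last_present g n)) @ [y])"
  using assms
proof (induction n arbitrary: y)
  case 0
  then show ?case
    by (simp add: gam_e_def)
next
  case (Suc n)
  let ?p = "last_present g n" and ?v = "gam ! n"
  let ?S = "\<lambda>n. \<Sum>j = 1..n. if g j then Ecost c gam D (last_present g (j - 1), j)
                               + c (Snode (gam ! (j - 1)), Enode (gam ! (j - 1))) else 0"
  have IH: "walk_cost c (Start # act_nodes (patient_prefix gam g D n) @ [z]) =
      ?S n + walk_cost c (gam_e gam ?p # act_nodes (D ?p) @ [z])" for z
    using Suc by simp
  show ?case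
  proof (cases "g (Suc n)")
    case True
    have "walk_cost c (Start # act_nodes (patient_prefix gam g D (Suc n)) @ [y]) =
        walk_cost c (Start # act_nodes (patient_prefix gam g D n) @ [Snode ?v])
        + c (Snode ?v, Enode ?v) + walk_cost c (Enode ?v # act_nodes (D (Suc n)) @ [y])"
      using True walk_cost_split[of c "Start # act_nodes (patient_prefix gam g D n)" "Snode ?v"
        "Enode ?v # act_nodes (D (Suc n)) @ [y]"]
      by simp
    moreover have "walk_cost c (gam_e gam ?p # act_nodes (D ?p) @ [Snode ?v]) = Ecost c gam D (?p, Suc n)"
      using Suc.prems(2) by (simp add: Ecost_eq_walk_cost gam_s_def)
    ultimately show ?thesis
      using True by (simp add: IH gam_e_def)
  next
    case False
    then show ?thesis
      using Suc.prems IH by simp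
  qed
qed

lemma walk_cost_reference_prefix:
  assumes "n \<le> length gam"
  shows "walk_cost c (Start # act_nodes (take n gam) @ [y]) =
    (\<Sum>j = 1..n. if g j then Fcost c gam (last_present g (j - 1), j)
                               + c (Snode (gam ! (j - 1)), Enode (gam ! (j - 1))) else 0)
    + walk_cost c (gam_e gam (last_present g n)
        # act_nodes (map (\<lambda>m. gam ! (m - 1)) [last_present g n + 1..<n + 1]) @ [y])"
  using assms
proof (induction n arbitrary: y)
  case 0
  then show ?case
    by (simp add: gam_e_def)
next
  case (Suc n)
  let ?p = "last_present g n" and ?v = "gam ! n"
  let ?R = "\<lambda>n. map (\<lambda>m. gam ! (m - 1)) [last_present g n + 1..<n + 1]"
  let ?S = "\<lambda>n. \<Sum>j = 1..n. if g j then Fcost c gam (last_present g (j - 1), j)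
                               + c (Snode (gam ! (j - 1)), Enode (gam ! (j - 1))) else 0"
  have IH: "walk_cost c (Start # act_nodes (take n gam) @ [Snode ?v]) =
      ?S n + walk_cost c (gam_e gam ?p # act_nodes (?R n) @ [Snode ?v])"
    using Suc by simp
  have split: "walk_cost c (Start # act_nodes (take (Suc n) gam) @ [y]) =
      walk_cost c (Start # act_nodes (take n gam) @ [Snode ?v]) + c (Snode ?v, Enode ?v) + c (Enode ?v, y)"
    using Suc.prems walk_cost_split[of c "Start # act_nodes (take n gam)" "Snode ?v" "[Enode ?v, y]"]
    by (simp add: take_Suc_conv_app_nth)
  have "?p \<le> n"
    by (rule last_present_le)
  show ?case
  proof (cases "g (Suc n)")
    case True
    have "walk_cost c (gam_e gam ?p # act_nodes (?R n) @ [Snode ?v]) = Fcost c gam (?p, Suc n)"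
      using Suc.prems \<open>?p \<le> n\<close> by (simp add: Fcost_eq_walk_cost gam_s_def)
    with True show ?thesis
      by (simp add: split IH gam_e_def)
  next
    case False
    then have "?R (Suc n) = ?R n @ [?v]"
      using \<open>?p \<le> n\<close> by simp
    with False show ?thesis
      using walk_cost_split[of c "gam_e gam ?p # act_nodes (?R n)" "Snode ?v" "[Enode ?v, y]"]
      by (simp add: split IH)
  qed
qed

lemma walk_cost_patient_walk:
  assumes gaps: "\<And>i. 1 \<le> i \<Longrightarrow> i \<le> length gam \<Longrightarrow> \<not> g i \<Longrightarrow> D i = []"
  shows "walk_cost c (seq_walk (patient_seq gam g D)) =
    (\<Sum>j = 1..length gam. if g j then Ecost c gam D (last_present g (j - 1), j)
                               + c (Snode (gam ! (j - 1)), Enode (gam ! (j - 1))) else 0)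
    + Ecost c gam D (last_present g (length gam), length gam + 1)"
  using walk_cost_patient_prefix[of "length gam" g D gam c End, OF gaps]
  by (simp add: seq_walk_def patient_seq_eq_patient_prefix Ecost_eq_walk_cost gam_s_def)

lemma walk_cost_reference_walk:
  "walk_cost c (seq_walk gam) =
    (\<Sum>j = 1..length gam. if g j then Fcost c gam (last_present g (j - 1), j)
                               + c (Snode (gam ! (j - 1)), Enode (gam ! (j - 1))) else 0)
    + Fcost c gam (last_present g (length gam), length gam + 1)"
  using walk_cost_reference_prefix[of "length gam" gam c End g]
    last_present_le[of g "length gam"]
  by (simp add: seq_walk_def Fcost_eq_walk_cost gam_s_def)

theorem theorem1:
  fixes V :: "'a set" and A :: "'a arc set" and c :: "'a arc \<Rightarrow> real"
    and gam :: "'a list" and g :: "nat \<Rightarrow> bool" and D :: "nat \<Rightarrow> 'a list"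
  assumes net: "activity_network V A"
    and ref_path: "st_path A (seq_walk gam)"
    and shortest: "\<And>ns. st_path A ns \<Longrightarrow> lin c A (flow (seq_walk gam)) \<le> lin c A (flow ns)"
    and gaps: "\<And>i. 1 \<le> i \<Longrightarrow> i \<le> length gam \<Longrightarrow> \<not> g i \<Longrightarrow> D i = []"
    and pat_walk: "st_walk A (seq_walk (patient_seq gam g D))"
    and M_ne: "Mval c A (flow (seq_walk (patient_seq gam g D))) \<noteq> lin c A (flow (seq_walk gam))"
  shows "omega c A gam (patient_seq gam g D)
         = 1 - (\<Sum>\<theta>\<in>detours gam g D. detour_cost c A gam (patient_seq gam g D) D \<theta>)"
proof -
  let ?pat = "patient_seq gam g D"
  have "finite A"
    using net by (rule activity_network_finite_arcs)
  then have "lin c A (flow (seq_walk ?pat)) - lin c A (flow (seq_walk gam))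
      = walk_cost c (seq_walk ?pat) - walk_cost c (seq_walk gam)"
    using pat_walk ref_path by (simp add: lin_flow_eq_walk_cost st_path_def st_walk_def)
  also have "\<dots> = (\<Sum>j = 1..length gam. if g j then Ecost c gam D (last_present g (j - 1), j)
                                            - Fcost c gam (last_present g (j - 1), j) else 0)
      + (Ecost c gam D (last_present g (length gam), length gam + 1)
         - Fcost c gam (last_present g (length gam), length gam + 1))"
    using gaps
    by (simp add: walk_cost_patient_walk walk_cost_reference_walk[where gam = gam and g = g]
        sum_subtractf[symmetric] if_distrib cong: if_cong)
  also have "\<dots> = (\<Sum>\<theta>\<in>detours gam g D. Ecost c gam D \<theta> - Fcost c gam \<theta>)"
    by (rule sum_detours[symmetric]) (simp add: Ecost_def Fcost_def)
  finally show ?thesis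
    by (simp add: omega_def detour_cost_def sum_divide_distrib)
qed

end
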